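(* Let $r\ge1$ and let $\mathbf{Y}^r$ be the $r$-fold Cartesian product of Young's lattice. For every $n\ge0$, the cokernel of the up map $U_n:\mathbb{Z}^{p_n}\to\mathbb{Z}^{p_{n+1}}$ of $\mathbf{Y}^r$ is a free abelian group.
   Context: Young's lattice $\mathbf{Y}$ is the poset of all integer partitions ordered by inclusion of Young diagrams, graded by size; $\mathbf{Y}^r$ has the componentwise order and rank equal to total size. With $P_n$ the set of rank-$n$ elements and $p_n=|P_n|$, the up map $U_n:\mathbb{Z}^{P_n}\to\mathbb{Z}^{P_{n+1}}$ sends each basis element to the sum of all elements covering it. *)

theory Defs
  imports "HOL-Algebra.Free_Abelian_Groups"
begin

(* A partition is encoded by its sequence of parts \<lambda>_0 \<ge> \<lambda>_1 \<ge> ... (nat \<Rightarrow> nat),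
   weakly decreasing and eventually zero. *)
definition is_partition :: "(nat \<Rightarrow> nat) \<Rightarrow> bool" where
  "is_partition l \<longleftrightarrow> (\<forall>i j. i \<le> j \<longrightarrow> l j \<le> l i) \<and> finite {i. l i \<noteq> 0}"

definition partition_size :: "(nat \<Rightarrow> nat) \<Rightarrow> nat" where
  "partition_size l = (\<Sum>i\<in>{i. l i \<noteq> 0}. l i)"

definition young_le :: "(nat \<Rightarrow> nat) \<Rightarrow> (nat \<Rightarrow> nat) \<Rightarrow> bool" where
  "young_le l m \<longleftrightarrow> (\<forall>i. l i \<le> m i)"

(* Elements of Y^r: r-tuples of partitions, encoded as functions on indices,
   with components at indices \<ge> r fixed to the empty partition. *)
definition Yr :: "nat \<Rightarrow> (nat \<Rightarrow> nat \<Rightarrow> nat) set" where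
  "Yr r = {L. (\<forall>k<r. is_partition (L k)) \<and> (\<forall>k\<ge>r. L k = (\<lambda>_. 0))}"

definition Yr_le :: "nat \<Rightarrow> (nat \<Rightarrow> nat \<Rightarrow> nat) \<Rightarrow> (nat \<Rightarrow> nat \<Rightarrow> nat) \<Rightarrow> bool" where
  "Yr_le r L M \<longleftrightarrow> (\<forall>k<r. young_le (L k) (M k))"

definition Yr_rank :: "nat \<Rightarrow> (nat \<Rightarrow> nat \<Rightarrow> nat) \<Rightarrow> nat" where
  "Yr_rank r L = (\<Sum>k<r. partition_size (L k))"

definition Yr_covers :: "nat \<Rightarrow> (nat \<Rightarrow> nat \<Rightarrow> nat) \<Rightarrow> (nat \<Rightarrow> nat \<Rightarrow> nat) \<Rightarrow> bool" where
  "Yr_covers r L M \<longleftrightarrow> L \<in> Yr r \<and> M \<in> Yr r \<and> Yr_le r L M \<and> L \<noteq> M \<and>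
     \<not> (\<exists>K\<in>Yr r. Yr_le r L K \<and> Yr_le r K M \<and> K \<noteq> L \<and> K \<noteq> M)"

definition Yr_level :: "nat \<Rightarrow> nat \<Rightarrow> (nat \<Rightarrow> nat \<Rightarrow> nat) set" where
  "Yr_level r n = {L \<in> Yr r. Yr_rank r L = n}"

(* Z^{P_n} is free_Abelian_group (Yr_level r n); the up map sends a basis
   element to the sum of all elements covering it, extended Z-linearly. *)
definition up_map :: "nat \<Rightarrow> nat \<Rightarrow> ((nat \<Rightarrow> nat \<Rightarrow> nat) \<Rightarrow>\<^sub>0 int) \<Rightarrow> ((nat \<Rightarrow> nat \<Rightarrow> nat) \<Rightarrow>\<^sub>0 int)" where
  "up_map r n = frag_extend (\<lambda>L. \<Sum>M\<in>{M \<in> Yr_level r (Suc n). Yr_covers r L M}. frag_of M)"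

definition up_cokernel :: "nat \<Rightarrow> nat \<Rightarrow> ((nat \<Rightarrow> nat \<Rightarrow> nat) \<Rightarrow>\<^sub>0 int) set monoid" where
  "up_cokernel r n = free_Abelian_group (Yr_level r (Suc n)) Mod
     (up_map r n ` carrier (free_Abelian_group (Yr_level r n)))"

(* A group is free abelian iff it is abelian and isomorphic to the free abelian
   group on some set (of the same element type as the group, which always
   suffices since a basis lies inside the carrier). *)
definition free_abelian :: "('a, 'b) monoid_scheme \<Rightarrow> bool" where
  "free_abelian G \<longleftrightarrow> comm_group G \<and> (\<exists>B :: 'a set. G \<cong> free_Abelian_group B)"

end

theory Submission
  imports Defs
begin

text \<open>Adding a box to the first row of the first component maps \<open>P\<^sub>n\<close> injectively into
  \<open>P\<^sub>n\<^sub>+\<^sub>1\<close>, and the image of \<open>L\<close> is a pivot of the column \<open>U\<^sub>n L\<close>: it occurs there with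
  coefficient 1, and it occurs in \<open>U\<^sub>n L'\<close> for \<open>L' \<noteq> L\<close> only if the first row of \<open>L'\<close> is longer
  than that of \<open>L\<close>, because a cover lengthening the first row is unique. So \<open>U\<^sub>n\<close> is
  unitriangular once columns are ordered by first-row length, and its cokernel is free on the
  elements of \<open>P\<^sub>n\<^sub>+\<^sub>1\<close> that are not pivots.\<close>

section \<open>Quotients of free abelian groups by complemented subgroups\<close>

lemma rcos_eq_iff_diff_mem_free_Abelian_group:
  assumes H: "subgroup H (free_Abelian_group P)"
    and x: "Poly_Mapping.keys x \<subseteq> P" and y: "Poly_Mapping.keys y \<subseteq> P"
  shows "H #>\<^bsub>free_Abelian_group P\<^esub> x = H #>\<^bsub>free_Abelian_group P\<^esub> y \<longleftrightarrow> x - y \<in> H"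
proof -
  interpret F: group "free_Abelian_group P" by simp
  have "H #>\<^bsub>free_Abelian_group P\<^esub> x = H #>\<^bsub>free_Abelian_group P\<^esub> y
      \<longleftrightarrow> x \<in> H #>\<^bsub>free_Abelian_group P\<^esub> y"
    using F.rcos_self[OF _ H, of x] F.repr_independence[OF _ _ H, of x y] x y by auto
  also have "\<dots> \<longleftrightarrow> x - y \<in> H"
    using subgroup.rcos_module[OF H F.is_group, of y x] x y by simp
  finally show ?thesis .
qed

lemma iso_free_Abelian_group_FactGroup_complement:
  assumes H: "subgroup H (free_Abelian_group P)" and "C \<subseteq> P"
    and span: "\<And>x. Poly_Mapping.keys x \<subseteq> P \<Longrightarrow> \<exists>c. Poly_Mapping.keys c \<subseteq> C \<and> x - c \<in> H"
    and disjoint: "\<And>c. Poly_Mapping.keys c \<subseteq> C \<Longrightarrow> c \<in> H \<Longrightarrow> c = 0"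
  shows "(\<lambda>c. H #>\<^bsub>free_Abelian_group P\<^esub> c)
           \<in> iso (free_Abelian_group C) (free_Abelian_group P Mod H)"
    (is "?\<psi> \<in> iso ?FC (?FP Mod H)")
proof -
  have normal: "H \<lhd> ?FP"
    using comm_group.normal_iff_subgroup[OF abelian_free_Abelian_group] H by blast
  have keysC: "Poly_Mapping.keys c \<subseteq> P" if "c \<in> carrier ?FC" for c
    using that \<open>C \<subseteq> P\<close> by auto
  have hom: "?\<psi> \<in> hom ?FC (?FP Mod H)"
    using normal.r_coset_hom_Mod[OF normal] keysC by (auto simp: hom_def)
  have inj: "inj_on ?\<psi> (carrier ?FC)"
  proof (rule inj_onI)
    fix c d assume c: "c \<in> carrier ?FC" and d: "d \<in> carrier ?FC" and "?\<psi> c = ?\<psi> d"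
    then have "c - d \<in> H"
      using rcos_eq_iff_diff_mem_free_Abelian_group[OF H] keysC by blast
    moreover have "Poly_Mapping.keys (c - d) \<subseteq> C"
      using c d keys_diff by fastforce
    ultimately have "c - d = 0" using disjoint by blast
    then show "c = d" by simp
  qed
  have "carrier (?FP Mod H) \<subseteq> ?\<psi> ` carrier ?FC"
  proof
    fix X assume "X \<in> carrier (?FP Mod H)"
    then obtain x where x: "Poly_Mapping.keys x \<subseteq> P" and X: "X = ?\<psi> x"
      by (auto simp: carrier_FactGroup)
    obtain c where c: "Poly_Mapping.keys c \<subseteq> C" "x - c \<in> H"
      using span[OF x] by blast
    then have "X = ?\<psi> c"
      using X x rcos_eq_iff_diff_mem_free_Abelian_group[OF H] \<open>C \<subseteq> P\<close> by blast
    then show "X \<in> ?\<psi> ` carrier ?FC" using c by auto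
  qed
  then show ?thesis
    using hom inj by (auto simp: iso_def bij_betw_def hom_def)
qed

lemma free_abelian_FactGroup_complement:
  assumes H: "subgroup H (free_Abelian_group P)" and "C \<subseteq> P"
    and span: "\<And>x. Poly_Mapping.keys x \<subseteq> P \<Longrightarrow> \<exists>c. Poly_Mapping.keys c \<subseteq> C \<and> x - c \<in> H"
    and disjoint: "\<And>c. Poly_Mapping.keys c \<subseteq> C \<Longrightarrow> c \<in> H \<Longrightarrow> c = 0"
  shows "free_abelian (free_Abelian_group P Mod H)"
proof -
  have "(\<lambda>c. H #>\<^bsub>free_Abelian_group P\<^esub> c)
          \<in> iso (free_Abelian_group C) (free_Abelian_group P Mod H)"
    by (rule iso_free_Abelian_group_FactGroup_complement) (use assms in auto)
  then have quotient_iso: "free_Abelian_group P Mod H \<cong> free_Abelian_group C"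
    by (rule group.iso_sym[OF group_free_Abelian_group is_isoI])
  \<comment> \<open>The basis must live in the element type of the quotient, i.e. consist of cosets.\<close>
  have "(\<lambda>c. {frag_of c}) ` C \<approx> C"
    by (rule inj_on_image_eqpoll_self) (auto simp: inj_on_def frag_of_eq)
  then have "free_Abelian_group C \<cong> free_Abelian_group ((\<lambda>c. {frag_of c}) ` C)"
    using isomorphic_free_Abelian_groups eqpoll_sym by blast
  then show ?thesis
    using iso_trans[OF quotient_iso] comm_group.abelian_FactGroup[OF abelian_free_Abelian_group H]
    unfolding free_abelian_def by blast
qed

section \<open>Unitriangular maps between free abelian groups\<close>

lemma lookup_frag_extend:
  "Poly_Mapping.lookup (frag_extend h x) M
     = (\<Sum>L\<in>Poly_Mapping.keys x. Poly_Mapping.lookup x L * Poly_Mapping.lookup (h L) M)"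
  by (simp add: frag_extend_def lookup_sum)

lemma frag_extend_hom_free_Abelian_group:
  assumes "\<And>L. L \<in> Q \<Longrightarrow> Poly_Mapping.keys (h L) \<subseteq> P"
  shows "frag_extend h \<in> hom (free_Abelian_group Q) (free_Abelian_group P)"
proof (rule homI)
  fix x assume "x \<in> carrier (free_Abelian_group Q)"
  then show "frag_extend h x \<in> carrier (free_Abelian_group P)"
    using keys_frag_extend[of h x] assms by auto
qed (simp add: frag_extend_add)

locale unitriangular_frag_extend =
  fixes h :: "'b \<Rightarrow> 'a \<Rightarrow>\<^sub>0 int" and Q :: "'b set" and P :: "'a set"
    and pivot :: "'b \<Rightarrow> 'a" and weight :: "'b \<Rightarrow> nat"
  assumes keys_subset: "L \<in> Q \<Longrightarrow> Poly_Mapping.keys (h L) \<subseteq> P"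
    and lookup_pivot: "L \<in> Q \<Longrightarrow> Poly_Mapping.lookup (h L) (pivot L) = 1"
    and lookup_pivot_other: "\<lbrakk>L \<in> Q; L' \<in> Q; L' \<noteq> L; Poly_Mapping.lookup (h L') (pivot L) \<noteq> 0\<rbrakk>
                               \<Longrightarrow> weight L < weight L'"
begin

abbreviation image_h :: "('a \<Rightarrow>\<^sub>0 int) set" where
  "image_h \<equiv> frag_extend h ` carrier (free_Abelian_group Q)"

abbreviation non_pivots :: "'a set" where
  "non_pivots \<equiv> P - pivot ` Q"

lemma subgroup_image_h: "subgroup image_h (free_Abelian_group P)"
  using frag_extend_hom_free_Abelian_group[OF keys_subset]
  by (intro group_hom.img_is_subgroup) (simp add: group_hom_def group_hom_axioms_def)

lemma image_h_diff: "a \<in> image_h \<Longrightarrow> b \<in> image_h \<Longrightarrow> a - b \<in> image_h"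
  using subgroup.m_closed[OF subgroup_image_h] subgroup.m_inv_closed[OF subgroup_image_h]
    subgroup.subset[OF subgroup_image_h]
  by (metis (no_types, lifting) carrier_free_Abelian_group_iff diff_conv_add_uminus
      inv_free_Abelian_group mult_free_Abelian_group subset_iff)

lemma image_h_disjoint_non_pivots:
  assumes c: "Poly_Mapping.keys c \<subseteq> non_pivots" and "c \<in> image_h"
  shows "c = 0"
proof -
  obtain x where x: "Poly_Mapping.keys x \<subseteq> Q" and c_eq: "c = frag_extend h x"
    using \<open>c \<in> image_h\<close> by auto
  have "x = 0"
  proof (rule ccontr)
    assume "x \<noteq> 0"
    then obtain L where L: "L \<in> Poly_Mapping.keys x" "weight L = Max (weight ` Poly_Mapping.keys x)"
      using Max_in[of "weight ` Poly_Mapping.keys x"] by fastforce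
    \<comment> \<open>Only the summand of a heaviest basis element contributes at its pivot.\<close>
    let ?t = "\<lambda>L'. Poly_Mapping.lookup x L' * Poly_Mapping.lookup (h L') (pivot L)"
    have "Poly_Mapping.lookup c (pivot L) = (\<Sum>L'\<in>Poly_Mapping.keys x. ?t L')"
      by (simp add: c_eq lookup_frag_extend)
    also have "\<dots> = ?t L + (\<Sum>L'\<in>Poly_Mapping.keys x - {L}. ?t L')"
      by (rule sum.remove[OF finite_keys L(1)])
    also have "(\<Sum>L'\<in>Poly_Mapping.keys x - {L}. ?t L') = 0"
    proof (rule sum.neutral, rule ballI)
      fix L' assume L': "L' \<in> Poly_Mapping.keys x - {L}"
      then have "\<not> weight L < weight L'"
        using L(2) by (simp add: leD)
      then show "?t L' = 0"
        using lookup_pivot_other[of L L'] L(1) L' x by auto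
    qed
    also have "?t L = Poly_Mapping.lookup x L"
      using lookup_pivot L(1) x by auto
    finally have "pivot L \<in> Poly_Mapping.keys c"
      using L(1) by (simp add: in_keys_iff)
    then show False
      using c L(1) x by auto
  qed
  then show ?thesis by (simp add: c_eq)
qed

definition reducible :: "('a \<Rightarrow>\<^sub>0 int) \<Rightarrow> bool" where
  "reducible y \<longleftrightarrow> (\<exists>c. Poly_Mapping.keys c \<subseteq> non_pivots \<and> y - c \<in> image_h)"

lemma reducible_image_h: "y \<in> image_h \<Longrightarrow> reducible y"
  unfolding reducible_def by (rule exI[of _ 0]) simp

lemma reducible_if_keys_non_pivots: "Poly_Mapping.keys c \<subseteq> non_pivots \<Longrightarrow> reducible c"
  unfolding reducible_def by (intro exI[of _ c]) (auto intro: image_eqI[of 0 _ 0])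

lemma reducible_diff:
  assumes "reducible y" "reducible z"
  shows "reducible (y - z)"
proof -
  obtain c d where c: "Poly_Mapping.keys c \<subseteq> non_pivots" "y - c \<in> image_h"
    and d: "Poly_Mapping.keys d \<subseteq> non_pivots" "z - d \<in> image_h"
    using assms unfolding reducible_def by blast
  have eq: "(y - z) - (c - d) = (y - c) - (z - d)" by simp
  have "(y - z) - (c - d) \<in> image_h"
    using image_h_diff[OF c(2) d(2)] by (simp only: eq)
  moreover have "Poly_Mapping.keys (c - d) \<subseteq> non_pivots"
    using c(1) d(1) keys_diff[of c d] by blast
  ultimately show ?thesis unfolding reducible_def by blast
qed

lemma reducible_if_basis_reducible:
  assumes "Poly_Mapping.keys y \<subseteq> S" and "\<And>M. M \<in> S \<Longrightarrow> reducible (frag_of M)"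
  shows "reducible y"
  using assms(1)
proof (induction y rule: frag_induction)
  case zero
  then show ?case using reducible_if_keys_non_pivots by simp
qed (use assms(2) reducible_diff in auto)

lemma reducible_frag_of_pivot: "L \<in> Q \<Longrightarrow> reducible (frag_of (pivot L))"
proof (induction "weight L" arbitrary: L rule: less_induct)
  case less
  \<comment> \<open>Subtracting the pivot from \<open>h L\<close> leaves only lighter pivots and non-pivots.\<close>
  have "reducible (frag_of M)" if M: "M \<in> Poly_Mapping.keys (h L) - {pivot L}" for M
  proof (cases "M \<in> pivot ` Q")
    case True
    then obtain L' where L': "L' \<in> Q" "M = pivot L'" by blast
    moreover have "Poly_Mapping.lookup (h L) (pivot L') \<noteq> 0" "L \<noteq> L'"
      using M L'(2) by (auto simp: in_keys_iff)
    ultimately have "weight L' < weight L"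
      using lookup_pivot_other less.prems by blast
    then show ?thesis using less.hyps L' by blast
  next
    case False
    then show ?thesis
      using M keys_subset[OF less.prems] by (intro reducible_if_keys_non_pivots) auto
  qed
  moreover have "Poly_Mapping.keys (h L - frag_of (pivot L)) \<subseteq> Poly_Mapping.keys (h L) - {pivot L}"
    using keys_diff[of "h L" "frag_of (pivot L)"] lookup_pivot[OF less.prems]
    by (auto simp: in_keys_iff lookup_minus)
  ultimately have "reducible (h L - frag_of (pivot L))"
    using reducible_if_basis_reducible by blast
  moreover have "reducible (h L)"
    using less.prems by (intro reducible_image_h) (auto intro!: image_eqI[of _ _ "frag_of L"])
  ultimately show ?case
    using reducible_diff[of "h L" "h L - frag_of (pivot L)"] by simp
qed

lemma reducible_free_Abelian_group:
  assumes "Poly_Mapping.keys y \<subseteq> P"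
  shows "reducible y"
proof (rule reducible_if_basis_reducible[OF assms])
  show "reducible (frag_of M)" if "M \<in> P" for M
    using that reducible_frag_of_pivot reducible_if_keys_non_pivots
    by (cases "M \<in> pivot ` Q") auto
qed

theorem free_abelian_cokernel:
  "free_abelian (free_Abelian_group P Mod image_h)"
proof (rule free_abelian_FactGroup_complement[OF subgroup_image_h])
  show "\<And>y. Poly_Mapping.keys y \<subseteq> P \<Longrightarrow> \<exists>c. Poly_Mapping.keys c \<subseteq> non_pivots \<and> y - c \<in> image_h"
    using reducible_free_Abelian_group unfolding reducible_def by blast
qed (use image_h_disjoint_non_pivots in auto)

end

section \<open>Adding a box to the first row\<close>

definition add_first_row_box :: "(nat \<Rightarrow> nat \<Rightarrow> nat) \<Rightarrow> nat \<Rightarrow> nat \<Rightarrow> nat" where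
  "add_first_row_box L = L(0 := (L 0)(0 := Suc (L 0 0)))"

lemma add_first_row_box_0_0 [simp]: "add_first_row_box L 0 0 = Suc (L 0 0)"
  by (simp add: add_first_row_box_def)

lemma add_first_row_box_other: "k \<noteq> 0 \<or> i \<noteq> 0 \<Longrightarrow> add_first_row_box L k i = L k i"
  by (auto simp: add_first_row_box_def)

lemma inj_add_first_row_box: "inj add_first_row_box"
proof (rule injI, intro ext)
  fix L L' k i assume eq: "add_first_row_box L = add_first_row_box L'"
  show "L k i = L' k i"
    using fun_cong[OF fun_cong[OF eq, of k], of i]
    by (cases "k = 0 \<and> i = 0") (auto simp: add_first_row_box_other)
qed

lemma partition_size_eq_sum:
  assumes "finite T" "{i. l i \<noteq> 0} \<subseteq> T"
  shows "partition_size l = sum l T"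
  unfolding partition_size_def by (rule sum.mono_neutral_left) (use assms in auto)

lemma is_partition_add_first_part:
  assumes "is_partition l"
  shows "is_partition (l(0 := Suc (l 0)))"
    and "partition_size (l(0 := Suc (l 0))) = Suc (partition_size l)"
proof -
  let ?T = "insert 0 {i. l i \<noteq> 0}"
  have fin: "finite ?T" using assms by (simp add: is_partition_def)
  have supp: "{i. (l(0 := Suc (l 0))) i \<noteq> 0} \<subseteq> ?T" by auto
  show "is_partition (l(0 := Suc (l 0)))"
    using assms finite_subset[OF supp fin] by (auto simp: is_partition_def le_Suc_eq)
  have "partition_size (l(0 := Suc (l 0))) = sum (l(0 := Suc (l 0))) ?T"
    using fin supp by (rule partition_size_eq_sum)
  also have "\<dots> = Suc (sum l ?T)"
    using fin by (simp add: sum.remove[of _ 0])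
  also have "sum l ?T = partition_size l"
    using fin by (intro partition_size_eq_sum[symmetric]) auto
  finally show "partition_size (l(0 := Suc (l 0))) = Suc (partition_size l)" .
qed

lemma add_first_row_box_Yr:
  assumes "r \<ge> 1" "L \<in> Yr r"
  shows "add_first_row_box L \<in> Yr r"
  using assms is_partition_add_first_part(1)[of "L 0"]
  by (auto simp: Yr_def add_first_row_box_def)

lemma Yr_rank_add_first_row_box:
  assumes "r \<ge> 1" "L \<in> Yr r"
  shows "Yr_rank r (add_first_row_box L) = Suc (Yr_rank r L)"
proof -
  have "is_partition (L 0)" using assms by (simp add: Yr_def)
  then have "partition_size (add_first_row_box L 0) = Suc (partition_size (L 0))"
    using is_partition_add_first_part(2) by (simp add: add_first_row_box_def)
  moreover have "(\<Sum>k\<in>{..<r} - {0}. partition_size (add_first_row_box L k))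
      = (\<Sum>k\<in>{..<r} - {0}. partition_size (L k))"
    by (rule sum.cong) (auto simp: add_first_row_box_def)
  ultimately show ?thesis
    unfolding Yr_rank_def using assms(1) by (simp add: sum.remove[of _ 0])
qed

lemma add_first_row_box_Yr_level:
  "r \<ge> 1 \<Longrightarrow> L \<in> Yr_level r n \<Longrightarrow> add_first_row_box L \<in> Yr_level r (Suc n)"
  using add_first_row_box_Yr Yr_rank_add_first_row_box by (auto simp: Yr_level_def)

lemma Yr_le_add_first_row_box: "Yr_le r L (add_first_row_box L)"
  by (auto simp: Yr_le_def young_le_def add_first_row_box_def)

lemma add_first_row_box_neq: "add_first_row_box L \<noteq> L"
  by (metis n_not_Suc_n add_first_row_box_0_0)

lemma Yr_covers_add_first_row_box:
  assumes "r \<ge> 1" "L \<in> Yr r"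
  shows "Yr_covers r L (add_first_row_box L)"
  unfolding Yr_covers_def
proof (intro conjI notI)
  show "L \<in> Yr r" "add_first_row_box L \<in> Yr r" "Yr_le r L (add_first_row_box L)"
    using assms add_first_row_box_Yr Yr_le_add_first_row_box by metis+
next
  assume "L = add_first_row_box L"
  then show False using add_first_row_box_neq by metis
next
  assume "\<exists>K\<in>Yr r. Yr_le r L K \<and> Yr_le r K (add_first_row_box L) \<and> K \<noteq> L \<and> K \<noteq> add_first_row_box L"
  then obtain K where K: "K \<in> Yr r" "Yr_le r L K" "Yr_le r K (add_first_row_box L)"
    "K \<noteq> L" "K \<noteq> add_first_row_box L"
    by blast
  have same: "K k i = L k i" if "k \<noteq> 0 \<or> i \<noteq> 0" for k i
  proof (cases "k < r")
    case True
    then show ?thesis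
      using K(2,3) add_first_row_box_other[OF that, of L]
      unfolding Yr_le_def young_le_def by (metis le_antisym)
  qed (use K(1) assms(2) in \<open>auto simp: Yr_def\<close>)
  have "L 0 0 \<le> K 0 0" "K 0 0 \<le> add_first_row_box L 0 0"
    using K(2,3) assms(1) unfolding Yr_le_def young_le_def by (meson less_le_trans zero_less_one)+
  then consider "K 0 0 = L 0 0" | "K 0 0 = Suc (L 0 0)"
    by (simp only: add_first_row_box_0_0) linarith
  then show False
  proof cases
    case 1
    then have "K = L" by (intro ext) (metis same)
    then show False using K(4) by simp
  next
    case 2
    then have "K = add_first_row_box L"
      by (intro ext) (metis same add_first_row_box_0_0 add_first_row_box_other)
    then show False using K(5) by simp
  qed
qed

lemma Yr_covers_imp_eq_add_first_row_box:
  assumes "r \<ge> 1" "Yr_covers r L M" "L 0 0 < M 0 0"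
  shows "M = add_first_row_box L"
proof -
  have L: "L \<in> Yr r" and le: "Yr_le r L M"
    using assms(2) by (auto simp: Yr_covers_def)
  have "Yr_le r (add_first_row_box L) M"
    using le assms(1,3) unfolding Yr_le_def young_le_def
    by (metis Suc_leI add_first_row_box_0_0 add_first_row_box_other)
  then show ?thesis
    using assms(2) add_first_row_box_Yr[OF assms(1) L] Yr_le_add_first_row_box add_first_row_box_neq
    unfolding Yr_covers_def by blast
qed

section \<open>Finite levels and the up map of \<open>Y\<^sup>r\<close>\<close>

lemma partition_bounded_by_size:
  assumes "is_partition l" "partition_size l \<le> m"
  shows "l i \<le> m" and "m \<le> i \<Longrightarrow> l i = 0"
proof -
  have fin: "finite {i. l i \<noteq> 0}" and dec: "\<And>i j. i \<le> j \<Longrightarrow> l j \<le> l i"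
    using assms(1) by (auto simp: is_partition_def)
  show "l i \<le> m"
  proof (cases "l i = 0")
    case False
    then have "l i \<le> partition_size l"
      unfolding partition_size_def using fin by (intro member_le_sum) auto
    then show ?thesis using assms(2) by simp
  qed simp
  show "l i = 0" if "m \<le> i"
  proof (rule ccontr)
    assume "l i \<noteq> 0"
    \<comment> \<open>Then the parts \<open>l 0, \<dots>, l i\<close> are all positive, so the size exceeds \<open>i\<close>.\<close>
    then have pos: "\<And>j. j \<le> i \<Longrightarrow> 1 \<le> l j"
      using dec by (metis less_one not_le le_trans)
    then have "card {..i} \<le> sum l {..i}"
      using sum_mono[of "{..i}" "\<lambda>_. 1" l] by simp
    also have "\<dots> \<le> partition_size l"
      unfolding partition_size_def using fin pos by (intro sum_mono2) fastforce+
    finally show False using assms(2) that by simp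
  qed
qed

lemma finite_Yr_level: "finite (Yr_level r m)"
proof -
  define F where "F = {l. \<forall>i. (i \<in> {..<m} \<longrightarrow> l i \<in> {..m}) \<and> (i \<notin> {..<m} \<longrightarrow> l i = 0)}"
  have "finite F"
    unfolding F_def by (rule finite_set_of_finite_funs) auto
  then have fin: "finite {L. \<forall>k. (k \<in> {..<r} \<longrightarrow> L k \<in> F) \<and> (k \<notin> {..<r} \<longrightarrow> L k = (\<lambda>_. 0))}"
    by (intro finite_set_of_finite_funs) auto
  have "L k \<in> F" if L: "L \<in> Yr_level r m" and "k < r" for L k
  proof -
    have "partition_size (L k) \<le> Yr_rank r L"
      unfolding Yr_rank_def using \<open>k < r\<close> by (intro member_le_sum) auto
    then show ?thesis
      using L \<open>k < r\<close> partition_bounded_by_size[of "L k" m]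
      by (auto simp: F_def Yr_level_def Yr_def)
  qed
  then have "Yr_level r m \<subseteq> {L. \<forall>k. (k \<in> {..<r} \<longrightarrow> L k \<in> F) \<and> (k \<notin> {..<r} \<longrightarrow> L k = (\<lambda>_. 0))}"
    by (auto simp: Yr_level_def Yr_def)
  then show ?thesis using fin finite_subset by blast
qed

lemma lookup_up_map_basis:
  "Poly_Mapping.lookup (\<Sum>M\<in>{M \<in> Yr_level r (Suc n). Yr_covers r L M}. frag_of M) M
     = (if M \<in> Yr_level r (Suc n) \<and> Yr_covers r L M then 1 else 0)"
  using finite_Yr_level[of r "Suc n"] by (simp add: lookup_sum)

lemma unitriangular_up_map:
  assumes "r \<ge> 1"
  shows "unitriangular_frag_extend (\<lambda>L. \<Sum>M\<in>{M \<in> Yr_level r (Suc n). Yr_covers r L M}. frag_of M)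
           (Yr_level r n) (Yr_level r (Suc n)) add_first_row_box (\<lambda>L. L 0 0)"
proof
  fix L assume L: "L \<in> Yr_level r n"
  show "Poly_Mapping.keys (\<Sum>M\<in>{M \<in> Yr_level r (Suc n). Yr_covers r L M}. frag_of M)
          \<subseteq> Yr_level r (Suc n)"
    using keys_sum by fastforce
  have "add_first_row_box L \<in> Yr_level r (Suc n)"
    using add_first_row_box_Yr_level[OF assms L] .
  moreover have "Yr_covers r L (add_first_row_box L)"
    using Yr_covers_add_first_row_box[OF assms] L by (simp add: Yr_level_def)
  ultimately show "Poly_Mapping.lookup (\<Sum>M\<in>{M \<in> Yr_level r (Suc n). Yr_covers r L M}. frag_of M)
               (add_first_row_box L) = 1"
    by (simp add: lookup_up_map_basis)
next
  fix L L' assume "L \<in> Yr_level r n" "L' \<in> Yr_level r n" "L' \<noteq> L"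
    and "Poly_Mapping.lookup (\<Sum>M\<in>{M \<in> Yr_level r (Suc n). Yr_covers r L' M}. frag_of M)
           (add_first_row_box L) \<noteq> 0"
  then have covers: "Yr_covers r L' (add_first_row_box L)"
    by (simp add: lookup_up_map_basis split: if_splits)
  show "L 0 0 < L' 0 0"
  proof (rule ccontr)
    assume "\<not> L 0 0 < L' 0 0"
    then have "add_first_row_box L = add_first_row_box L'"
      using Yr_covers_imp_eq_add_first_row_box[OF assms covers] by simp
    then show False
      using inj_add_first_row_box \<open>L' \<noteq> L\<close> by (auto dest: injD)
  qed
qed

theorem proposition6p5:
  fixes r n :: nat
  assumes "r \<ge> 1"
  shows "free_abelian (up_cokernel r n)"
  unfolding up_cokernel_def up_map_def
  using unitriangular_frag_extend.free_abelian_cokernel[OF unitriangular_up_map[OF assms]] .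

end
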